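(* Under SC decoding, the block erasure threshold of the product code sequence defined by the component code sets $\mathscr{C}^{[m]}=\{\mathcal{C}_1,\mathcal{C}_2,\ldots,\mathcal{C}_m\}$, where $\mathcal{C}_i$, $i=1,\dots,m$, are $(m,m-1)$ SPC codes, is zero.
   Context: For each $m$, let $\mathcal{C}^{[m]}$ be the $m$-dimensional product code whose $m$ component codes are all $(m,m-1)$ single parity-check (SPC) codes, i.e., an $(m^m,(m-1)^m,2^m)$ code with rate $(1-1/m)^m\to e^{-1}$. Transmission is over the binary erasure channel BEC($\epsilon_{\mathrm{ch}}$), and decoding uses successive cancellation (SC) decoding (information bits decoded sequentially, each using the previous decisions, with likelihoods computed recursively across the dimensions starting from the first component code), outputting an erasure on ties. The SC block erasure threshold of the sequence is $\epsilon^\star=\sup_{\epsilon_{\mathrm{ch}}\in[0,1)}\{\epsilon_{\mathrm{ch}}:\lim_{m\to\infty}P_{\mathrm{SC}}(\mathcal{C}^{[m]})=0\}$, where $P_{\mathrm{SC}}(\mathcal{C}^{[m]})$ is the block error probability of $\mathcal{C}^{[m]}$ under SC decoding. *)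

theory Defs
  imports Complex_Main
begin

text \<open>
  The m-dimensional product code whose components are all the (m,m-1) single
  parity-check code with generator matrix [I_{m-1} | 1] (last coordinate is the
  parity).  A j-dimensional message is a function on {0..<(m-1)^j}, a codeword a
  function on {0..<m^j}.  Index decomposition: the outermost (first) component
  acts on index p div m^j (codeword) / q div (m-1)^j (message).
\<close>

primrec spc_enc :: "nat \<Rightarrow> nat \<Rightarrow> (nat \<Rightarrow> bool) \<Rightarrow> (nat \<Rightarrow> bool)" where
  "spc_enc m 0 u = (\<lambda>p. u 0)"
| "spc_enc m (Suc j) u =
     (\<lambda>p. let c = p div m ^ j; d = p mod m ^ j;
              w = (\<lambda>a. spc_enc m j (\<lambda>b. u (a * (m - 1) ^ j + b)))
          in if c < m - 1 then w c d
             else odd (card {a. a < m - 1 \<and> w a d}))"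

text \<open>
  BEC observations are \<open>bool option\<close> (None = erasure).  Successive cancellation
  message for outer block a (0 \<le> a < m-1) at inner coordinate d, given the
  already decoded message blocks U c for c < a (re-encoded via spc_enc).
  It is the BEC specialisation of the SC likelihood: the channel value of
  block a if not erased; otherwise the parity-check estimate if the parity
  position and all later (not yet decoded) systematic blocks are unerased;
  otherwise an erasure (tie).
\<close>

definition spc_sc_msg ::
  "nat \<Rightarrow> nat \<Rightarrow> (nat \<Rightarrow> bool option) \<Rightarrow> (nat \<Rightarrow> nat \<Rightarrow> bool) \<Rightarrow> nat \<Rightarrow> (nat \<Rightarrow> bool option)" where
  "spc_sc_msg m j y U a =
     (\<lambda>d. let yv = (\<lambda>c. y (c * m ^ j + d));
              val = (\<lambda>c. if c < a then spc_enc m j (U c) d else the (yv c))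
          in if yv a \<noteq> None then yv a
             else if (\<forall>c. a < c \<and> c < m \<longrightarrow> yv c \<noteq> None)
               then Some (odd (card {c. c < m \<and> c \<noteq> a \<and> val c}))
             else None)"

text \<open>
  SC decoder (None = an erasure was output on some information bit).
  Blocks a = 0, ..., m-2 of the outermost component are decoded in order, each
  recursively by the (j)-dimensional SC decoder.
\<close>

primrec spc_sc_dec :: "nat \<Rightarrow> nat \<Rightarrow> (nat \<Rightarrow> bool option) \<Rightarrow> (nat \<Rightarrow> bool) option" where
  "spc_sc_dec m 0 y = (case y 0 of None \<Rightarrow> None | Some b \<Rightarrow> Some (\<lambda>_. b))"
| "spc_sc_dec m (Suc j) y =
     map_option (\<lambda>U q. U (q div (m - 1) ^ j) (q mod (m - 1) ^ j))
       (fold (\<lambda>a acc. case acc of None \<Rightarrow> None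
                 | Some U \<Rightarrow> (case spc_sc_dec m j (spc_sc_msg m j y U a) of
                               None \<Rightarrow> None
                             | Some ua \<Rightarrow> Some (U(a := ua))))
             [0..<m - 1] (Some (\<lambda>_ _. False)))"

text \<open>
  Block error probability of the code C^[m] under SC decoding over BEC(eps):
  averaged over uniformly random messages (subsets S of {0..<(m-1)^m} give the
  message bits), summing over erasure patterns E of the m^m positions.
\<close>

definition P_SC :: "nat \<Rightarrow> real \<Rightarrow> real" where
  "P_SC m eps =
     (let K = (m - 1) ^ m; N = m ^ m in
      (1 / 2 ^ K) *
      (\<Sum>S\<in>Pow {..<K}. \<Sum>E\<in>Pow {..<N}.
          eps ^ card E * (1 - eps) ^ (N - card E) *
          (let u = (\<lambda>q. q \<in> S);
               y = (\<lambda>p. if p \<in> E then None else Some (spc_enc m m u p))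
           in if (\<exists>f. spc_sc_dec m m y = Some f \<and> (\<forall>q<K. f q = u q)) then 0 else 1)))"

definition SC_threshold :: "(nat \<Rightarrow> real \<Rightarrow> real) \<Rightarrow> real" where
  "SC_threshold P = Sup {eps. 0 \<le> eps \<and> eps < 1 \<and> (\<lambda>m. P m eps) \<longlonglongrightarrow> 0}"

end

theory Submission
  imports Defs "HOL-Library.Disjoint_Sets"
begin

text \<open>
  Over the erasure channel the SC decoder already fails on the first information bit with
  probability \<open>g^m(\<epsilon>)\<close>, where \<open>g(x) = x (1 - (1 - x)^(m-1))\<close>: one level down, that bit
  is erased iff its own coordinate and at least one of the other \<open>m - 1\<close> coordinates of its
  parity check are erased, and these events are independent across the disjoint parity checks.
  As long as \<open>x \<ge> \<epsilon>/2\<close>, one application of \<open>g\<close> lowers \<open>x\<close> by at most \<open>(1 - \<epsilon>/2)^(m-1)\<close>,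
  so \<open>g^m(\<epsilon>) \<ge> \<epsilon> - m (1 - \<epsilon>/2)^(m-1) \<ge> \<epsilon>/2\<close> for large \<open>m\<close>. Hence \<open>P_SC m \<epsilon>\<close> does not
  tend to \<open>0\<close> for any \<open>\<epsilon> > 0\<close>, whereas \<open>P_SC m 0 = 0\<close>.
\<close>

section \<open>Independent erasures\<close>

text \<open>Law of the random set of erased positions when each \<open>i \<in> A\<close> is erased independently
  with probability \<open>p i\<close>.\<close>

definition bern_weight :: "('a \<Rightarrow> real) \<Rightarrow> 'a set \<Rightarrow> 'a set \<Rightarrow> real" where
  "bern_weight p A E = (\<Prod>i\<in>E. p i) * (\<Prod>i\<in>A - E. 1 - p i)"

definition bern_prob :: "('a \<Rightarrow> real) \<Rightarrow> 'a set \<Rightarrow> ('a set \<Rightarrow> bool) \<Rightarrow> real" where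
  "bern_prob p A Q = (\<Sum>E\<in>Pow A. bern_weight p A E * of_bool (Q E))"

lemma sum_Pow_Un_disjoint:
  assumes "finite X" "finite Y" "X \<inter> Y = {}"
  shows "(\<Sum>E\<in>Pow (X \<union> Y). f E) = (\<Sum>E1\<in>Pow X. \<Sum>E2\<in>Pow Y. f (E1 \<union> E2))"
proof -
  have "bij_betw (\<lambda>(E1, E2). E1 \<union> E2) (Pow X \<times> Pow Y) (Pow (X \<union> Y))"
    by (rule bij_betw_byWitness[where f' = "\<lambda>E. (E \<inter> X, E \<inter> Y)"]) (use assms in auto)
  then have "(\<Sum>E\<in>Pow (X \<union> Y). f E) = (\<Sum>(E1, E2)\<in>Pow X \<times> Pow Y. f (E1 \<union> E2))"
    by (simp add: sum.reindex_bij_betw[symmetric] case_prod_unfold)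
  then show ?thesis
    by (simp add: sum.cartesian_product)
qed

lemma bern_weight_Un:
  assumes "finite X" "finite Y" "X \<inter> Y = {}" "E1 \<subseteq> X" "E2 \<subseteq> Y"
  shows "bern_weight p (X \<union> Y) (E1 \<union> E2) = bern_weight p X E1 * bern_weight p Y E2"
proof -
  have "(X \<union> Y) - (E1 \<union> E2) = (X - E1) \<union> (Y - E2)" "(X - E1) \<inter> (Y - E2) = {}" "E1 \<inter> E2 = {}"
    using assms by auto
  moreover have "finite E1" "finite E2"
    using assms(1,2,4,5) rev_finite_subset by blast+
  ultimately show ?thesis
    using assms by (simp add: bern_weight_def prod.union_disjoint)
qed

lemma sum_bern_weight: "finite A \<Longrightarrow> (\<Sum>E\<in>Pow A. bern_weight p A E) = 1"
  using prod_add[of A p "\<lambda>i. 1 - p i"] by (simp add: bern_weight_def)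

lemma bern_weight_const:
  assumes "finite A" "E \<subseteq> A"
  shows "bern_weight (\<lambda>_. e) A E = e ^ card E * (1 - e) ^ (card A - card E)"
  using assms by (simp add: bern_weight_def card_Diff_subset finite_subset)

lemma bern_prob_cong: "(\<And>E. E \<subseteq> A \<Longrightarrow> Q E = Q' E) \<Longrightarrow> bern_prob p A Q = bern_prob p A Q'"
  unfolding bern_prob_def by (intro sum.cong refl) auto

lemma bern_prob_mono:
  assumes "\<And>i. i \<in> A \<Longrightarrow> 0 \<le> p i \<and> p i \<le> 1" "\<And>E. E \<subseteq> A \<Longrightarrow> Q E \<Longrightarrow> Q' E"
  shows "bern_prob p A Q \<le> bern_prob p A Q'"
  unfolding bern_prob_def
proof (rule sum_mono)
  fix E assume "E \<in> Pow A"
  then have "0 \<le> bern_weight p A E"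
    using assms(1) by (auto simp: bern_weight_def intro!: prod_nonneg mult_nonneg_nonneg)
  then show "bern_weight p A E * of_bool (Q E) \<le> bern_weight p A E * of_bool (Q' E)"
    using assms(2) \<open>E \<in> Pow A\<close> by (intro mult_left_mono) auto
qed

lemma bern_prob_not: "finite A \<Longrightarrow> bern_prob p A (\<lambda>E. \<not> Q E) = 1 - bern_prob p A Q"
  by (simp add: bern_prob_def of_bool_not_iff algebra_simps sum_subtractf sum_bern_weight)

lemma bern_prob_zero: "finite A \<Longrightarrow> bern_prob (\<lambda>_. 0) A Q = of_bool (Q {})"
proof -
  assume "finite A"
  then have "bern_weight (\<lambda>_. 0) A E = of_bool (E = {})" if "E \<subseteq> A" for E
    using that by (auto simp: bern_weight_def finite_subset)
  then have "bern_prob (\<lambda>_. 0) A Q = (\<Sum>E\<in>Pow A. if E = {} then of_bool (Q E) else 0)"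
    unfolding bern_prob_def by (intro sum.cong refl) auto
  then show ?thesis
    using \<open>finite A\<close> by (simp add: sum.delta')
qed

lemma bern_prob_Un:
  assumes "finite X" "finite Y" "X \<inter> Y = {}"
  shows "bern_prob p (X \<union> Y) Q =
    (\<Sum>E1\<in>Pow X. bern_weight p X E1 * bern_prob p Y (\<lambda>F. Q (E1 \<union> F)))"
proof -
  have "bern_prob p (X \<union> Y) Q =
      (\<Sum>E1\<in>Pow X. \<Sum>E2\<in>Pow Y. bern_weight p (X \<union> Y) (E1 \<union> E2) * of_bool (Q (E1 \<union> E2)))"
    unfolding bern_prob_def using assms by (rule sum_Pow_Un_disjoint)
  also have "\<dots> = (\<Sum>E1\<in>Pow X. \<Sum>E2\<in>Pow Y.
      bern_weight p X E1 * (bern_weight p Y E2 * of_bool (Q (E1 \<union> E2))))"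
    using assms by (intro sum.cong refl) (simp add: bern_weight_Un)
  finally show ?thesis
    by (simp add: bern_prob_def sum_distrib_left)
qed

lemma bern_prob_insert:
  assumes "finite A" "a \<notin> A"
  shows "bern_prob p (insert a A) Q =
    p a * bern_prob p A (\<lambda>F. Q (insert a F)) + (1 - p a) * bern_prob p A Q"
proof -
  have "Pow {a} = {{}, {a}}"
    by blast
  then show ?thesis
    using bern_prob_Un[of "{a}" A p Q] assms by (simp add: bern_weight_def)
qed

lemma bern_prob_nonempty: "finite A \<Longrightarrow> bern_prob p A (\<lambda>F. F \<noteq> {}) = 1 - (\<Prod>i\<in>A. 1 - p i)"
  using bern_prob_not[of A p "\<lambda>F. F = {}"]
  by (simp add: bern_prob_def sum.delta' bern_weight_def)

text \<open>Events depending on disjoint blocks are independent: the set of blocks whose event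
  occurs is again Bernoulli, with parameters \<open>q d\<close>.\<close>

lemma bern_prob_blocks:
  assumes "finite A" "\<And>d. d \<in> A \<Longrightarrow> finite (B d)" "disjoint_family_on B A"
    and "\<And>d. d \<in> A \<Longrightarrow> bern_prob p (B d) (h d) = q d"
  shows "bern_prob p (\<Union>d\<in>A. B d) (\<lambda>E. Q {d\<in>A. h d (E \<inter> B d)}) = bern_prob q A Q"
  using assms
proof (induction A arbitrary: Q rule: finite_induct)
  case empty
  then show ?case
    by (simp add: bern_prob_def bern_weight_def)
next
  case (insert a A)
  define U where "U = (\<Union>d\<in>A. B d)"
  have fin: "finite (B a)" "finite U" and disj: "B a \<inter> U = {}"
    using insert.hyps insert.prems by (auto simp: U_def disjoint_family_on_def)
  define Q' where "Q' E1 S = Q (if h a E1 then insert a S else S)" for E1 S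
  have event: "{d\<in>insert a A. h d ((E1 \<union> F) \<inter> B d)} =
      (if h a E1 then insert a {d\<in>A. h d (F \<inter> B d)} else {d\<in>A. h d (F \<inter> B d)})"
    if "E1 \<subseteq> B a" "F \<subseteq> U" for E1 F
  proof -
    have "(E1 \<union> F) \<inter> B a = E1"
      using that disj by auto
    moreover have "(E1 \<union> F) \<inter> B d = F \<inter> B d" if "d \<in> A" for d
    proof -
      have "B a \<inter> B d = {}"
        using that insert.hyps(2) by (intro disjoint_family_onD[OF insert.prems(2)]) auto
      then show ?thesis
        using \<open>E1 \<subseteq> B a\<close> by auto
    qed
    ultimately show ?thesis
      by auto
  qed
  have inner: "bern_prob p U (\<lambda>F. Q {d\<in>insert a A. h d ((E1 \<union> F) \<inter> B d)}) =
      (if h a E1 then bern_prob q A (\<lambda>S. Q (insert a S)) else bern_prob q A Q)"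
    if "E1 \<subseteq> B a" for E1
  proof -
    have "bern_prob p U (\<lambda>F. Q {d\<in>insert a A. h d ((E1 \<union> F) \<inter> B d)}) =
        bern_prob p U (\<lambda>F. Q' E1 {d\<in>A. h d (F \<inter> B d)})"
      using that by (intro bern_prob_cong) (simp only: event Q'_def)
    also have "\<dots> = bern_prob q A (Q' E1)"
      unfolding U_def using insert.prems by (intro insert.IH) (auto intro: disjoint_family_on_mono)
    finally show ?thesis
      by (simp add: Q'_def[abs_def])
  qed
  have "bern_prob p (\<Union>d\<in>insert a A. B d) (\<lambda>E. Q {d\<in>insert a A. h d (E \<inter> B d)}) =
      (\<Sum>E1\<in>Pow (B a). bern_weight p (B a) E1 *
        (if h a E1 then bern_prob q A (\<lambda>S. Q (insert a S)) else bern_prob q A Q))"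
    using bern_prob_Un[OF fin disj] inner by (simp add: U_def)
  also have "\<dots> = bern_prob p (B a) (h a) * bern_prob q A (\<lambda>S. Q (insert a S)) +
      bern_prob p (B a) (\<lambda>E. \<not> h a E) * bern_prob q A Q"
    unfolding bern_prob_def[of p "B a"] sum_distrib_right sum.distrib[symmetric]
    by (intro sum.cong refl) auto
  also have "\<dots> = bern_prob q (insert a A) Q"
    using insert fin by (simp add: bern_prob_not bern_prob_insert)
  finally show ?case .
qed

section \<open>Erasure of the first information bit\<close>

definition erasure_map :: "nat \<Rightarrow> real \<Rightarrow> real" where
  "erasure_map m x = x * (1 - (1 - x) ^ (m - 1))"

text \<open>The erasure pattern \<open>Er\<close> of \<open>C^[j]\<close> makes SC output an erasure on information bit \<open>0\<close>:
  the SC message of outer block \<open>0\<close> at inner coordinate \<open>d\<close> is erased exactly when \<open>d\<close> and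
  some other position of its parity check are erased (cf. \<open>spc_sc_msg\<close>).\<close>

primrec first_bit_erased :: "nat \<Rightarrow> nat \<Rightarrow> (nat \<Rightarrow> bool) \<Rightarrow> bool" where
  "first_bit_erased m 0 Er = Er 0"
| "first_bit_erased m (Suc j) Er =
     first_bit_erased m j (\<lambda>d. Er d \<and> (\<exists>c. 0 < c \<and> c < m \<and> Er (c * m ^ j + d)))"

definition check_line :: "nat \<Rightarrow> nat \<Rightarrow> nat \<Rightarrow> nat set" where
  "check_line m j d = (\<lambda>c. c * m ^ j + d) ` {..<m}"

lemma mult_pow_add_less:
  fixes c d m j :: nat
  assumes "c < m" "d < m ^ j"
  shows "c * m ^ j + d < m ^ Suc j"
proof -
  have "c * m ^ j + d < (c + 1) * m ^ j"
    using assms(2) by simp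
  also have "\<dots> \<le> m * m ^ j"
    using assms(1) by (intro mult_le_mono1) simp
  finally show ?thesis
    by simp
qed

lemma first_bit_erased_cong:
  "0 < m \<Longrightarrow> (\<And>p. p < m ^ j \<Longrightarrow> Er p = Er' p) \<Longrightarrow> first_bit_erased m j Er = first_bit_erased m j Er'"
proof (induction j arbitrary: Er Er')
  case (Suc j)
  show ?case
    unfolding first_bit_erased.simps
  proof (rule Suc.IH[OF Suc.prems(1)])
    fix p assume p: "p < m ^ j"
    have "Er p = Er' p"
      using Suc.prems mult_pow_add_less[of 0 m p j] p by simp
    moreover have "\<forall>c<m. Er (c * m ^ j + p) = Er' (c * m ^ j + p)"
      using Suc.prems(2) mult_pow_add_less p by blast
    ultimately show "(Er p \<and> (\<exists>c. 0 < c \<and> c < m \<and> Er (c * m ^ j + p))) =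
        (Er' p \<and> (\<exists>c. 0 < c \<and> c < m \<and> Er' (c * m ^ j + p)))"
      by auto
  qed
qed simp

lemma lessThan_pow_Suc_eq_UN_check_line:
  assumes "0 < m"
  shows "{..<m ^ Suc j} = (\<Union>d<m ^ j. check_line m j d)"
proof (intro equalityI subsetI)
  fix p assume "p \<in> {..<m ^ Suc j}"
  then have "p div m ^ j < m"
    by (simp add: less_mult_imp_div_less mult.commute)
  moreover have "p = p div m ^ j * m ^ j + p mod m ^ j"
    by (metis div_mult_mod_eq)
  moreover have "p mod m ^ j < m ^ j"
    using assms by simp
  ultimately show "p \<in> (\<Union>d<m ^ j. check_line m j d)"
    unfolding check_line_def by blast
qed (auto simp: check_line_def mult_pow_add_less[simplified])

lemma finite_check_line: "finite (check_line m j d)"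
  by (simp add: check_line_def)

lemma disjoint_family_check_line: "disjoint_family_on (check_line m j) {..<m ^ j}"
proof -
  have "d = d'" if "d < m ^ j" "d' < m ^ j" "c * m ^ j + d = c' * m ^ j + d'" for c c' d d'
    using arg_cong[OF that(3), of "\<lambda>x. x mod m ^ j"] that(1,2) by simp
  then show ?thesis
    by (fastforce simp: disjoint_family_on_def check_line_def)
qed

lemma bern_prob_mem_and_meets:
  assumes "finite R" "a \<notin> R"
  shows "bern_prob (\<lambda>_. e) (insert a R) (\<lambda>E. a \<in> E \<and> E \<inter> R \<noteq> {}) = e * (1 - (1 - e) ^ card R)"
proof -
  have "bern_prob (\<lambda>_. e) R (\<lambda>F. a \<in> insert a F \<and> insert a F \<inter> R \<noteq> {}) =
      bern_prob (\<lambda>_. e) R (\<lambda>F. F \<noteq> {})"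
    using assms by (intro bern_prob_cong) auto
  moreover have "bern_prob (\<lambda>_. e) R (\<lambda>F. a \<in> F \<and> F \<inter> R \<noteq> {}) = 0"
    unfolding bern_prob_def using assms by (intro sum.neutral) auto
  ultimately show ?thesis
    using assms by (simp add: bern_prob_insert bern_prob_nonempty)
qed

lemma bern_prob_check_line:
  assumes "0 < m"
  shows "bern_prob (\<lambda>_. e) (check_line m j d) (\<lambda>E. d \<in> E \<and> (\<exists>c. 0 < c \<and> c < m \<and> c * m ^ j + d \<in> E))
    = erasure_map m e"
proof -
  define R where "R = (\<lambda>c. c * m ^ j + d) ` {0<..<m}"
  have "check_line m j d = insert d R"
    using assms unfolding check_line_def R_def by (force simp: image_iff)
  moreover have "d \<notin> R" "card R = m - 1"
    using assms by (auto simp: R_def card_image inj_on_def)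
  moreover have "(\<exists>c. 0 < c \<and> c < m \<and> c * m ^ j + d \<in> E) \<longleftrightarrow> E \<inter> R \<noteq> {}" for E
    by (auto simp: R_def)
  ultimately show ?thesis
    by (simp add: R_def bern_prob_mem_and_meets erasure_map_def)
qed

lemma bern_prob_first_bit_erased:
  assumes "0 < m"
  shows "bern_prob (\<lambda>_. e) {..<m ^ j} (\<lambda>E. first_bit_erased m j (\<lambda>p. p \<in> E)) = (erasure_map m ^^ j) e"
proof (induction j arbitrary: e)
  case 0
  have "Pow {0::nat} = {{}, {0}}"
    by blast
  then show ?case
    by (simp add: bern_prob_def bern_weight_def lessThan_Suc)
next
  case (Suc j)
  define h where "h d E \<longleftrightarrow> d \<in> E \<and> (\<exists>c. 0 < c \<and> c < m \<and> c * m ^ j + d \<in> E)" for d E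
  have "first_bit_erased m (Suc j) (\<lambda>p. p \<in> E) =
      first_bit_erased m j (\<lambda>p. p \<in> {d \<in> {..<m ^ j}. h d (E \<inter> check_line m j d)})" for E
    unfolding first_bit_erased.simps(2)
  proof (rule first_bit_erased_cong[OF assms])
    fix p assume "p < m ^ j"
    moreover have "c * m ^ j + p \<in> check_line m j p" if "c < m" for c
      using that by (simp add: check_line_def)
    moreover have "p \<in> check_line m j p"
      using assms by (force simp: check_line_def)
    ultimately show "(p \<in> E \<and> (\<exists>c. 0 < c \<and> c < m \<and> c * m ^ j + p \<in> E)) =
        (p \<in> {d \<in> {..<m ^ j}. h d (E \<inter> check_line m j d)})"
      using assms mult_pow_add_less by (auto simp: h_def)
  qed
  then have "bern_prob (\<lambda>_. e) {..<m ^ Suc j} (\<lambda>E. first_bit_erased m (Suc j) (\<lambda>p. p \<in> E)) =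
      bern_prob (\<lambda>_. e) (\<Union>d<m ^ j. check_line m j d)
        (\<lambda>E. first_bit_erased m j (\<lambda>p. p \<in> {d \<in> {..<m ^ j}. h d (E \<inter> check_line m j d)}))"
    unfolding lessThan_pow_Suc_eq_UN_check_line[OF assms] by simp
  also have "\<dots> = bern_prob (\<lambda>_. erasure_map m e) {..<m ^ j} (\<lambda>F. first_bit_erased m j (\<lambda>p. p \<in> F))"
    using disjoint_family_check_line bern_prob_check_line[OF assms]
    by (intro bern_prob_blocks) (simp_all add: h_def finite_check_line)
  also have "\<dots> = (erasure_map m ^^ Suc j) e"
    by (simp only: Suc.IH funpow_Suc_right o_def)
  finally show ?case .
qed

section \<open>Behaviour of the SC decoder\<close>

lemma fold_upt_Some_update:
  assumes "\<And>a U. a < k \<Longrightarrow> \<exists>v. F a (Some U) = Some (U(a := v)) \<and> P a v"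
  shows "\<exists>U. fold F [0..<k] (Some U0) = Some U \<and> (\<forall>a<k. P a (U a))"
  using assms
proof (induction k)
  case (Suc k)
  have "\<exists>U. fold F [0..<k] (Some U0) = Some U \<and> (\<forall>a<k. P a (U a))"
    using Suc.prems by (intro Suc.IH) simp
  then obtain U where U: "fold F [0..<k] (Some U0) = Some U" "\<forall>a<k. P a (U a)"
    by blast
  moreover obtain v where "F k (Some U) = Some (U(k := v))" "P k v"
    using Suc.prems by blast
  ultimately show ?case
    by (auto simp: less_Suc_eq)
qed simp

lemma fold_case_option_None:
  "fold (\<lambda>a acc. case acc of None \<Rightarrow> None | Some U \<Rightarrow> G a U) xs None = None"
  by (induction xs) auto

lemma spc_enc_Suc_block:
  assumes "a < m - 1" "d < m ^ j"
  shows "spc_enc m (Suc j) u (a * m ^ j + d) = spc_enc m j (\<lambda>b. u (a * (m - 1) ^ j + b)) d"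
proof -
  have "0 < m ^ j"
    using assms(2) by linarith
  then have "(a * m ^ j + d) div m ^ j = a" "(a * m ^ j + d) mod m ^ j = d"
    using assms(2) by (simp_all add: div_add1_eq)
  then show ?thesis
    using assms(1) by (simp add: Let_def)
qed

lemma spc_sc_msg_unerased:
  assumes "\<And>p. p < m ^ Suc j \<Longrightarrow> y p = Some (spc_enc m (Suc j) u p)" "a < m - 1" "d < m ^ j"
  shows "spc_sc_msg m j y U a d = Some (spc_enc m j (\<lambda>b. u (a * (m - 1) ^ j + b)) d)"
proof -
  have "a * m ^ j + d < m ^ Suc j"
    using assms(2,3) by (intro mult_pow_add_less) auto
  from assms(1)[OF this]
  have "y (a * m ^ j + d) = Some (spc_enc m j (\<lambda>b. u (a * (m - 1) ^ j + b)) d)"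
    unfolding spc_enc_Suc_block[OF assms(2,3)] .
  then show ?thesis
    by (simp add: spc_sc_msg_def)
qed

lemma spc_sc_dec_correct:
  assumes "\<And>p. p < m ^ j \<Longrightarrow> y p = Some (spc_enc m j u p)"
  shows "\<exists>f. spc_sc_dec m j y = Some f \<and> (\<forall>q<(m - 1) ^ j. f q = u q)"
  using assms
proof (induction j arbitrary: y u)
  case (Suc j)
  define F where "F a acc = (case acc of None \<Rightarrow> None
      | Some U \<Rightarrow> (case spc_sc_dec m j (spc_sc_msg m j y U a) of
                    None \<Rightarrow> None
                  | Some ua \<Rightarrow> Some (U(a := ua))))" for a acc
  have "\<exists>v. F a (Some U) = Some (U(a := v)) \<and> (\<forall>q<(m - 1) ^ j. v q = u (a * (m - 1) ^ j + q))"
    if "a < m - 1" for a U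
  proof -
    have "spc_sc_msg m j y U a d = Some (spc_enc m j (\<lambda>b. u (a * (m - 1) ^ j + b)) d)"
      if "d < m ^ j" for d
      using spc_sc_msg_unerased[OF Suc.prems \<open>a < m - 1\<close> that] .
    then obtain v where "spc_sc_dec m j (spc_sc_msg m j y U a) = Some v"
        "\<forall>q<(m - 1) ^ j. v q = u (a * (m - 1) ^ j + q)"
      using Suc.IH[of "spc_sc_msg m j y U a" "\<lambda>b. u (a * (m - 1) ^ j + b)"] by blast
    then show ?thesis
      by (auto simp: F_def)
  qed
  then obtain U where U: "fold F [0..<m - 1] (Some (\<lambda>_ _. False)) = Some U"
      "\<forall>a<m - 1. \<forall>q<(m - 1) ^ j. U a q = u (a * (m - 1) ^ j + q)"
    using fold_upt_Some_update[of "m - 1" F "\<lambda>a v. \<forall>q<(m - 1) ^ j. v q = u (a * (m - 1) ^ j + q)"]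
    by blast
  have "U (q div (m - 1) ^ j) (q mod (m - 1) ^ j) = u q" if "q < (m - 1) ^ Suc j" for q
  proof -
    have "0 < (m - 1) ^ j"
      using that by (cases "(m - 1) ^ j = 0") auto
    then have "q div (m - 1) ^ j < m - 1" "q mod (m - 1) ^ j < (m - 1) ^ j"
      using that by (simp_all add: less_mult_imp_div_less mult.commute)
    then show ?thesis
      using U(2) by (simp add: div_mult_mod_eq)
  qed
  moreover have "spc_sc_dec m (Suc j) y = Some (\<lambda>q. U (q div (m - 1) ^ j) (q mod (m - 1) ^ j))"
    using U(1) unfolding F_def[abs_def] by simp
  ultimately show ?case
    by auto
qed simp

lemma spc_sc_dec_None_if_first_bit_erased:
  assumes "2 \<le> m"
  shows "first_bit_erased m j (\<lambda>p. y p = None) \<Longrightarrow> spc_sc_dec m j y = None"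
proof (induction j arbitrary: y)
  case (Suc j)
  have "(\<lambda>d. spc_sc_msg m j y U 0 d = None) =
      (\<lambda>d. y d = None \<and> (\<exists>c. 0 < c \<and> c < m \<and> y (c * m ^ j + d) = None))" for U
    by (rule ext) (auto simp: spc_sc_msg_def Let_def)
  then have "spc_sc_dec m j (spc_sc_msg m j y (\<lambda>_ _. False) 0) = None"
    using Suc by simp
  moreover have "[0..<m - 1] = 0 # [1..<m - 1]"
    using assms by (simp add: upt_conv_Cons)
  ultimately show ?case
    by (simp add: fold_case_option_None)
qed simp

section \<open>The SC block error probability\<close>

definition sc_fails :: "nat \<Rightarrow> (nat \<Rightarrow> bool) \<Rightarrow> nat set \<Rightarrow> bool" where
  "sc_fails m u E \<longleftrightarrow>
     \<not> (\<exists>f. spc_sc_dec m m (\<lambda>p. if p \<in> E then None else Some (spc_enc m m u p)) = Some f \<and>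
          (\<forall>q<(m - 1) ^ m. f q = u q))"

lemma P_SC_eq_mean_bern_prob:
  "P_SC m e =
     (\<Sum>S\<in>Pow {..<(m - 1) ^ m}. bern_prob (\<lambda>_. e) {..<m ^ m} (sc_fails m (\<lambda>q. q \<in> S))) / 2 ^ (m - 1) ^ m"
proof -
  have fails: "(if \<exists>f. spc_sc_dec m m (\<lambda>p. if p \<in> E then None else Some (spc_enc m m (\<lambda>q. q \<in> S) p)) = Some f
        \<and> (\<forall>q<(m - 1) ^ m. f q = (q \<in> S)) then 0 else 1) = (of_bool (sc_fails m (\<lambda>q. q \<in> S) E) :: real)"
    for S E
    by (simp add: sc_fails_def)
  have "P_SC m e = 1 / 2 ^ (m - 1) ^ m *
      (\<Sum>S\<in>Pow {..<(m - 1) ^ m}. bern_prob (\<lambda>_. e) {..<m ^ m} (sc_fails m (\<lambda>q. q \<in> S)))"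
    unfolding P_SC_def Let_def fails bern_prob_def
    by (intro arg_cong2[where f = "(*)"] refl sum.cong) (simp_all add: bern_weight_const)
  then show ?thesis
    by simp
qed

lemma not_sc_fails_empty: "\<not> sc_fails m u {}"
  using spc_sc_dec_correct[of m m "\<lambda>p. Some (spc_enc m m u p)" u] by (simp add: sc_fails_def)

lemma sc_fails_if_first_bit_erased:
  assumes "2 \<le> m" "first_bit_erased m m (\<lambda>p. p \<in> E)"
  shows "sc_fails m u E"
proof -
  have "(\<lambda>p. (if p \<in> E then None else Some (spc_enc m m u p)) = None) = (\<lambda>p. p \<in> E)"
    by auto
  then show ?thesis
    using spc_sc_dec_None_if_first_bit_erased[OF assms(1)] assms(2) by (simp add: sc_fails_def)
qed

lemma P_SC_zero: "P_SC m 0 = 0"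
  by (simp add: P_SC_eq_mean_bern_prob bern_prob_zero not_sc_fails_empty)

lemma erasure_map_iterate_le_P_SC:
  assumes "2 \<le> m" "0 \<le> e" "e \<le> 1"
  shows "(erasure_map m ^^ m) e \<le> P_SC m e"
proof -
  have "(erasure_map m ^^ m) e = bern_prob (\<lambda>_. e) {..<m ^ m} (\<lambda>E. first_bit_erased m m (\<lambda>p. p \<in> E))"
    using assms(1) by (simp add: bern_prob_first_bit_erased)
  also have "\<dots> \<le> bern_prob (\<lambda>_. e) {..<m ^ m} (sc_fails m u)" for u
    using assms by (intro bern_prob_mono) (auto intro: sc_fails_if_first_bit_erased)
  finally have "(erasure_map m ^^ m) e \<le> bern_prob (\<lambda>_. e) {..<m ^ m} (sc_fails m u)" for u .
  then have "(\<Sum>S\<in>Pow {..<(m - 1) ^ m}. (erasure_map m ^^ m) e) \<le>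
      (\<Sum>S\<in>Pow {..<(m - 1) ^ m}. bern_prob (\<lambda>_. e) {..<m ^ m} (sc_fails m (\<lambda>q. q \<in> S)))"
    by (intro sum_mono)
  then show ?thesis
    by (simp add: P_SC_eq_mean_bern_prob card_Pow field_simps)
qed

lemma erasure_map_range:
  assumes "0 \<le> x" "x \<le> 1"
  shows "0 \<le> erasure_map m x \<and> erasure_map m x \<le> 1"
proof -
  have "0 \<le> (1 - x) ^ (m - 1)" "(1 - x) ^ (m - 1) \<le> 1"
    using assms by (auto intro: power_le_one)
  then show ?thesis
    using assms by (auto simp: erasure_map_def intro: mult_le_one)
qed

lemma erasure_map_iterate_range: "0 \<le> e \<Longrightarrow> e \<le> 1 \<Longrightarrow> 0 \<le> (erasure_map m ^^ k) e \<and> (erasure_map m ^^ k) e \<le> 1"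
  by (induction k) (auto dest: erasure_map_range)

lemma erasure_map_ge: "0 \<le> x \<Longrightarrow> x \<le> 1 \<Longrightarrow> x - (1 - x) ^ (m - 1) \<le> erasure_map m x"
  by (simp add: erasure_map_def algebra_simps mult_left_le_one_le)

lemma erasure_map_iterate_ge:
  assumes "0 \<le> e" "e \<le> 1" "real k * (1 - e / 2) ^ (m - 1) \<le> e / 2"
  shows "e - real k * (1 - e / 2) ^ (m - 1) \<le> (erasure_map m ^^ k) e"
  using assms(3)
proof (induction k)
  case (Suc k)
  define x where "x = (erasure_map m ^^ k) e"
  define \<delta> where "\<delta> = (1 - e / 2) ^ (m - 1)"
  have "0 \<le> \<delta>"
    using assms by (simp add: \<delta>_def)
  then have IH: "e - real k * \<delta> \<le> x"
    using Suc by (simp add: x_def \<delta>_def algebra_simps)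
  then have "e / 2 \<le> x" "x \<le> 1"
    using Suc.prems \<open>0 \<le> \<delta>\<close> erasure_map_iterate_range[OF assms(1,2)]
    by (auto simp: x_def \<delta>_def algebra_simps)
  then have "(1 - x) ^ (m - 1) \<le> \<delta>"
    unfolding \<delta>_def by (intro power_mono) auto
  then have "x - \<delta> \<le> erasure_map m x"
    using erasure_map_ge[of x m] \<open>e / 2 \<le> x\<close> \<open>x \<le> 1\<close> assms(1) by linarith
  then show ?case
    using IH by (simp add: x_def \<delta>_def algebra_simps)
qed simp

lemma real_times_power_pred_tendsto_zero:
  fixes r :: real
  assumes "\<bar>r\<bar> < 1"
  shows "(\<lambda>m. real m * r ^ (m - 1)) \<longlonglongrightarrow> 0"
proof (rule LIMSEQ_imp_Suc)
  have "(\<lambda>n. real n * r ^ n + r ^ n) \<longlonglongrightarrow> 0 + 0"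
    using assms by (intro tendsto_add powser_times_n_limit_0 LIMSEQ_power_zero) auto
  then show "(\<lambda>n. real (Suc n) * r ^ (Suc n - 1)) \<longlonglongrightarrow> 0"
    by (simp add: algebra_simps)
qed

lemma P_SC_eventually_ge:
  assumes "0 < e" "e < 1"
  shows "\<forall>\<^sub>F m in sequentially. e / 2 \<le> P_SC m e"
proof -
  have "(\<lambda>m. real m * (1 - e / 2) ^ (m - 1)) \<longlonglongrightarrow> 0"
    using assms by (intro real_times_power_pred_tendsto_zero) simp
  then have "\<forall>\<^sub>F m in sequentially. real m * (1 - e / 2) ^ (m - 1) < e / 2"
    using assms by (intro order_tendstoD(2)) auto
  moreover have "\<forall>\<^sub>F m in sequentially. 2 \<le> m"
    by (rule eventually_ge_at_top)
  ultimately show ?thesis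
  proof eventually_elim
    case (elim m)
    then have "e / 2 \<le> (erasure_map m ^^ m) e"
      using erasure_map_iterate_ge[of e m m] assms by linarith
    then show "e / 2 \<le> P_SC m e"
      using erasure_map_iterate_le_P_SC[of m e] elim assms by linarith
  qed
qed

theorem theorem2:
  shows "SC_threshold P_SC = 0"
proof -
  have "{eps. 0 \<le> eps \<and> eps < 1 \<and> (\<lambda>m. P_SC m eps) \<longlonglongrightarrow> 0} = {0}"
  proof (intro equalityI subsetI)
    fix eps assume "eps \<in> {eps. 0 \<le> eps \<and> eps < 1 \<and> (\<lambda>m. P_SC m eps) \<longlonglongrightarrow> 0}"
    then have "0 \<le> eps" "eps < 1" and lim: "(\<lambda>m. P_SC m eps) \<longlonglongrightarrow> 0"
      by auto
    moreover have "eps / 2 \<le> 0" if "0 < eps"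
      using tendsto_lowerbound[OF lim P_SC_eventually_ge[OF that \<open>eps < 1\<close>]] by simp
    ultimately show "eps \<in> {0}"
      by force
  qed (simp add: P_SC_zero)
  then show ?thesis
    by (simp add: SC_threshold_def)
qed

end
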